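(* Let $\mathcal{O}$, $n$, $\alpha,\beta$ and $\rho=\rho^1\cdots\rho^k$ with index sets $\mathcal{L},\mathcal{N}$ be as in the standing setup. Then $$\sum_{i\in\mathcal{L}}\mathrm{len}(\rho^i)+\sum_{i\in\mathcal{N}}\bigl(\mathrm{len}(\rho^i_{\mathrm{pref}})+\mathrm{len}(\rho^i_{\mathrm{suff}})\bigr)\le 5n^2.$$
   Context: $\mathbb{N}=\{0,1,2,\dots\}$. A one-counter system (OCS) $\mathcal{O}$ consists of a finite set $Q$ of states, a set $T_{>0}\subseteq Q\times\{-1,0,1\}\times Q$ of non-zero transitions and a set $T_{=0}\subseteq Q\times\{0,1\}\times Q$ of zero tests. A configuration is a pair $(q,c)\in Q\times\mathbb{N}$ (state $q$, counter value $c$). A transition $t=(p,d,q)$ has source $p$, target $q$, effect $d$; it can be fired in $(p,c)$ if either $t\in T_{>0}$ and $c>0$, or $t\in T_{=0}$ and $c=0$, yielding $(q,c+d)$. A path is a sequence $(\gamma_1,t_1)\cdots(\gamma_m,t_m)$ such that, with some $\gamma_{m+1}$, firing $t_i$ in $\gamma_i$ yields $\gamma_{i+1}$ for all $i\le m$; its source is $\gamma_1$, target $\gamma_{m+1}$, length $\mathrm{len}=m$, configurations appearing on it are $\gamma_1,\dots,\gamma_{m+1}$, intermediate ones are $\gamma_2,\dots,\gamma_m$; its projection is $\mathrm{proj}=t_1\cdots t_m$ and its effect $\mathrm{eff}$ is the sum of the effects of its transitions. A sequence of transitions is consistent if each transition's target is the next one's source. A cycle is a consistent sequence of non-zero transitions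 starting and ending in the same state (its base state); positive/negative if its effect is positive/negative; simple if no state is visited twice except the base at start and end. The transition multigraph $G$ has vertices $Q$ and an edge $p\to q$ labelled $d$ for each $(p,d,q)\in T_{>0}$; $\mathfrak{S}$ is the set of its SCCs and $n_S$ the number of states in $S\in\mathfrak{S}$. A cycle is contained in $S$ if all its states lie in $S$; $S$ is positively (negatively) enabled if it contains a positive (negative) cycle. For every positively enabled $S$ a simple positive cycle $\sigma^+_S$ contained in $S$ is fixed, and for every negatively enabled $T$ a simple negative cycle $\sigma^-_T$ contained in $T$. An arc is a path whose source and target have counter value $0$ and whose intermediate configurations have positive counter value. A path is low if all configurations appearing on it have counter value $<5n$, where $n=|Q|$. For $S,T\in\mathfrak{S}$, an arc $\rho$ is $(S,T)$-normal if $\rho=\rho_{\mathrm{pref}}\rho_{\mathrm{up}}\rho_{\mathrm{cap}}\rho_{\mathrm{down}}\rho_{\mathrm{suff}}$ (normal decomposition) with $\rho_{\mathrm{pref}},\rho_{\mathrm{suff}}$ low, $\mathrm{proj}(\rho_{\mathrm{up}})=(\sigma^+_S)^a$, $\mathrm{proj}(\rho_{\mathrm{down}})=(\sigma^-_T)^b$ for some $a,b\in\mathbb{N}$, the source of $\rho_{\mathrm{cap}}$ having the base state of $\sigma^+_S$ and its target the base state of $\sigma^-_T$. Writing $A=\mathrm{eff}(\sigma^+_S)$, $B=-\mathrm{eff}(\sigma^-_T)$, such a decomposition is good if: (iii) $aA\le 2\,\mathrm{len}(\rho_{\mathrm{cap}})+2\,\mathrm{lcm}(A,B)$; (iv) $bB\le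 2\,\mathrm{len}(\rho_{\mathrm{cap}})+2\,\mathrm{lcm}(A,B)$; (v) no infix of $\mathrm{proj}(\rho_{\mathrm{cap}})$ is a cycle with effect divisible by $\gcd(A,B)$; (vi) the target of $\rho_{\mathrm{up}}$ and the source of $\rho_{\mathrm{down}}$ have counter values $>n$; (vii) all configurations appearing on $\rho_{\mathrm{pref}}$ and $\rho_{\mathrm{suff}}$ together are pairwise distinct. Standing setup: $\alpha,\beta$ are configurations with counter value $0$; $\rho=\rho^1\rho^2\cdots\rho^k$ is a path from $\alpha$ to $\beta$ that has the minimum possible number of appearing configurations with counter value $0$ among all paths from $\alpha$ to $\beta$; each $\rho^i$ is an arc; $\{1,\dots,k\}=\mathcal{L}\sqcup\mathcal{N}$ where for $i\in\mathcal{L}$, $\rho^i$ is a low arc of minimum length among all low arcs with the same source and target, and for $i\in\mathcal{N}$, $\rho^i$ is $(S_i,T_i)$-normal for some $S_i,T_i\in\mathfrak{S}$ with a fixed good normal decomposition $\rho^i=\rho^i_{\mathrm{pref}}\rho^i_{\mathrm{up}}\rho^i_{\mathrm{cap}}\rho^i_{\mathrm{down}}\rho^i_{\mathrm{suff}}$. For $S,T\in\mathfrak{S}$: $\mathcal{N}_{(S,T)}=\{i\in\mathcal{N}: (S_i,T_i)=(S,T)\}$, $\mathcal{N}_{(S,\cdot)}=\{i\in\mathcal{N}:S_i=S\}$, $\mathcal{N}_{(\cdot,T)}=\{i\in\mathcal{N}:T_i=T\}$. *)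

theory Defs
  imports Main
begin

text \<open>One-counter systems. A transition is a triple (p,d,q) with effect d.
  An OCS is given by a finite state set Q, non-zero transitions Tpos and zero tests Tzero.\<close>

type_synonym 'q trans = "'q \<times> int \<times> 'q"
type_synonym 'q conf = "'q \<times> nat"
text \<open>A path is represented by its source configuration and its list of transitions
  (all appearing configurations are determined by these).\<close>
type_synonym 'q path = "'q conf \<times> 'q trans list"

definition tsrc :: "'q trans \<Rightarrow> 'q" where "tsrc t = fst t"
definition teff :: "'q trans \<Rightarrow> int" where "teff t = fst (snd t)"
definition ttrg :: "'q trans \<Rightarrow> 'q" where "ttrg t = snd (snd t)"

definition wf_ocs :: "'q set \<Rightarrow> 'q trans set \<Rightarrow> 'q trans set \<Rightarrow> bool" where
  "wf_ocs Q Tpos Tzero \<longleftrightarrow> finite Q \<and> Tpos \<subseteq> Q \<times> {-1,0,1} \<times> Q \<and> Tzero \<subseteq> Q \<times> {0,1} \<times> Q"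

definition fireable :: "'q trans set \<Rightarrow> 'q trans set \<Rightarrow> 'q trans \<Rightarrow> 'q conf \<Rightarrow> bool" where
  "fireable Tpos Tzero t \<gamma> \<longleftrightarrow> tsrc t = fst \<gamma> \<and>
     ((t \<in> Tpos \<and> snd \<gamma> > 0) \<or> (t \<in> Tzero \<and> snd \<gamma> = 0))"

definition fire :: "'q trans \<Rightarrow> 'q conf \<Rightarrow> 'q conf" where
  "fire t \<gamma> = (ttrg t, nat (int (snd \<gamma>) + teff t))"

fun confs_from :: "'q conf \<Rightarrow> 'q trans list \<Rightarrow> 'q conf list" where
  "confs_from \<gamma> [] = [\<gamma>]"
| "confs_from \<gamma> (t # ts) = \<gamma> # confs_from (fire t \<gamma>) ts"

definition confs :: "'q path \<Rightarrow> 'q conf list" where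
  "confs \<rho> = confs_from (fst \<rho>) (snd \<rho>)"

definition is_path :: "'q trans set \<Rightarrow> 'q trans set \<Rightarrow> 'q path \<Rightarrow> bool" where
  "is_path Tpos Tzero \<rho> \<longleftrightarrow> (\<forall>i < length (snd \<rho>). fireable Tpos Tzero (snd \<rho> ! i) (confs \<rho> ! i))"

definition psource :: "'q path \<Rightarrow> 'q conf" where "psource \<rho> = fst \<rho>"
definition ptarget :: "'q path \<Rightarrow> 'q conf" where "ptarget \<rho> = last (confs \<rho>)"
definition plen :: "'q path \<Rightarrow> nat" where "plen \<rho> = length (snd \<rho>)"
definition proj :: "'q path \<Rightarrow> 'q trans list" where "proj \<rho> = snd \<rho>"
definition seff :: "'q trans list \<Rightarrow> int" where "seff ts = sum_list (map teff ts)"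

text \<open>intermediate configurations gamma_2, ..., gamma_m\<close>
definition intermediate :: "'q path \<Rightarrow> 'q conf list" where
  "intermediate \<rho> = take (plen \<rho> - 1) (drop 1 (confs \<rho>))"

text \<open>concatenation of paths (used when the target of the first is the source of the second)\<close>
definition pcat :: "'q path \<Rightarrow> 'q path \<Rightarrow> 'q path" where
  "pcat \<rho>1 \<rho>2 = (fst \<rho>1, snd \<rho>1 @ snd \<rho>2)"

definition is_arc :: "'q trans set \<Rightarrow> 'q trans set \<Rightarrow> 'q path \<Rightarrow> bool" where
  "is_arc Tpos Tzero \<rho> \<longleftrightarrow> is_path Tpos Tzero \<rho> \<and> snd (psource \<rho>) = 0 \<and> snd (ptarget \<rho>) = 0
     \<and> (\<forall>\<gamma> \<in> set (intermediate \<rho>). snd \<gamma> > 0)"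

definition low :: "nat \<Rightarrow> 'q path \<Rightarrow> bool" where
  "low n \<rho> \<longleftrightarrow> (\<forall>\<gamma> \<in> set (confs \<rho>). snd \<gamma> < 5 * n)"

definition zero_count :: "'q path \<Rightarrow> nat" where
  "zero_count \<rho> = length (filter (\<lambda>\<gamma>. snd \<gamma> = 0) (confs \<rho>))"

definition consistent :: "'q trans list \<Rightarrow> bool" where
  "consistent ts \<longleftrightarrow> (\<forall>i. Suc i < length ts \<longrightarrow> ttrg (ts ! i) = tsrc (ts ! Suc i))"

definition is_cycle :: "'q trans set \<Rightarrow> 'q trans list \<Rightarrow> bool" where
  "is_cycle Tpos cs \<longleftrightarrow> cs \<noteq> [] \<and> set cs \<subseteq> Tpos \<and> consistent cs \<and> tsrc (hd cs) = ttrg (last cs)"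

definition base :: "'q trans list \<Rightarrow> 'q" where "base cs = tsrc (hd cs)"

definition simple_cycle :: "'q trans set \<Rightarrow> 'q trans list \<Rightarrow> bool" where
  "simple_cycle Tpos cs \<longleftrightarrow> is_cycle Tpos cs \<and> distinct (map tsrc cs)"

definition contained :: "'q trans list \<Rightarrow> 'q set \<Rightarrow> bool" where
  "contained cs S \<longleftrightarrow> (\<forall>t \<in> set cs. tsrc t \<in> S \<and> ttrg t \<in> S)"

definition edge_rel :: "'q trans set \<Rightarrow> ('q \<times> 'q) set" where
  "edge_rel Tpos = {(p, q). \<exists>d. (p, d, q) \<in> Tpos}"

definition is_scc :: "'q set \<Rightarrow> 'q trans set \<Rightarrow> 'q set \<Rightarrow> bool" where
  "is_scc Q Tpos S \<longleftrightarrow> (\<exists>p \<in> Q. S = {q \<in> Q. (p, q) \<in> (edge_rel Tpos)\<^sup>* \<and> (q, p) \<in> (edge_rel Tpos)\<^sup>*})"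

definition pos_enabled :: "'q trans set \<Rightarrow> 'q set \<Rightarrow> bool" where
  "pos_enabled Tpos S \<longleftrightarrow> (\<exists>cs. is_cycle Tpos cs \<and> contained cs S \<and> seff cs > 0)"

definition neg_enabled :: "'q trans set \<Rightarrow> 'q set \<Rightarrow> bool" where
  "neg_enabled Tpos S \<longleftrightarrow> (\<exists>cs. is_cycle Tpos cs \<and> contained cs S \<and> seff cs < 0)"

definition valid_choice :: "'q set \<Rightarrow> 'q trans set \<Rightarrow> ('q set \<Rightarrow> 'q trans list) \<Rightarrow> ('q set \<Rightarrow> 'q trans list) \<Rightarrow> bool" where
  "valid_choice Q Tpos sigp sigm \<longleftrightarrow>
     (\<forall>S. is_scc Q Tpos S \<and> pos_enabled Tpos S \<longrightarrow>
        simple_cycle Tpos (sigp S) \<and> contained (sigp S) S \<and> seff (sigp S) > 0) \<and>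
     (\<forall>T. is_scc Q Tpos T \<and> neg_enabled Tpos T \<longrightarrow>
        simple_cycle Tpos (sigm T) \<and> contained (sigm T) T \<and> seff (sigm T) < 0)"

definition good_normal_decomp ::
  "'q set \<Rightarrow> 'q trans set \<Rightarrow> 'q trans set \<Rightarrow> ('q set \<Rightarrow> 'q trans list) \<Rightarrow> ('q set \<Rightarrow> 'q trans list) \<Rightarrow>
   'q set \<Rightarrow> 'q set \<Rightarrow> 'q path \<Rightarrow>
   'q path \<Rightarrow> 'q path \<Rightarrow> 'q path \<Rightarrow> 'q path \<Rightarrow> 'q path \<Rightarrow> nat \<Rightarrow> nat \<Rightarrow> bool" where
  "good_normal_decomp Q Tpos Tzero sigp sigm S T \<rho> pref up cap down suff a b \<longleftrightarrow>
     (let n = card Q; A = seff (sigp S); B = - seff (sigm T) in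
     is_arc Tpos Tzero \<rho> \<and> is_scc Q Tpos S \<and> is_scc Q Tpos T \<and>
     pos_enabled Tpos S \<and> neg_enabled Tpos T \<and>
     is_path Tpos Tzero pref \<and> is_path Tpos Tzero up \<and> is_path Tpos Tzero cap \<and>
     is_path Tpos Tzero down \<and> is_path Tpos Tzero suff \<and>
     ptarget pref = psource up \<and> ptarget up = psource cap \<and> ptarget cap = psource down \<and>
     ptarget down = psource suff \<and>
     \<rho> = pcat pref (pcat up (pcat cap (pcat down suff))) \<and>
     low n pref \<and> low n suff \<and>
     proj up = concat (replicate a (sigp S)) \<and>
     proj down = concat (replicate b (sigm T)) \<and>
     fst (psource cap) = base (sigp S) \<and> fst (ptarget cap) = base (sigm T) \<and>
     \<comment> \<open>(iii), (iv)\<close>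
     int a * A \<le> 2 * int (plen cap) + 2 * lcm A B \<and>
     int b * B \<le> 2 * int (plen cap) + 2 * lcm A B \<and>
     \<comment> \<open>(v)\<close>
     \<not> (\<exists>u v w. proj cap = u @ v @ w \<and> is_cycle Tpos v \<and> gcd A B dvd seff v) \<and>
     \<comment> \<open>(vi)\<close>
     snd (ptarget up) > n \<and> snd (psource down) > n \<and>
     \<comment> \<open>(vii)\<close>
     distinct (confs pref @ confs suff))"

end

theory Submission
  imports Defs
begin

text \<open>Every counted transition is fired from a distinct configuration of \<open>\<rho>\<close>: from all but the
  last configuration of each low arc, and of the prefix and the suffix of each normal arc. These
  configurations have their state in \<open>Q\<close> and counter value below \<open>5n\<close>, so it suffices that they
  are pairwise distinct. Two equal configurations in different arcs enclose the zero
  configuration starting the later arc, and cutting out the loop between them would give a path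
  from \<open>\<alpha>\<close> to \<open>\<beta>\<close> with fewer zero configurations. A repetition inside a low arc could be cut
  out to give a shorter low arc, and inside the prefix and suffix of a normal arc it is excluded
  by condition (vii).\<close>

lemma length_confs_from [simp]: "length (confs_from g ts) = Suc (length ts)"
  by (induction ts arbitrary: g) auto

lemma confs_from_ne [simp]: "confs_from g ts \<noteq> []"
  by (cases ts) auto

lemma confs_from_append:
  "confs_from g (xs @ ys) = butlast (confs_from g xs) @ confs_from (fold fire xs g) ys"
  by (induction xs arbitrary: g) auto

lemma take_confs_from: "take (Suc m) (confs_from g ts) = confs_from g (take m ts)"
  by (induction ts arbitrary: g m) (auto simp: take_Cons split: nat.split)

lemma drop_confs_from:
  "m \<le> length ts \<Longrightarrow> drop m (confs_from g ts) = confs_from (fold fire (take m ts) g) (drop m ts)"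
  by (induction ts arbitrary: g m) (auto simp: drop_Cons split: nat.split)

lemma nth_confs_from: "m \<le> length ts \<Longrightarrow> confs_from g ts ! m = fold fire (take m ts) g"
  by (induction ts arbitrary: g m) (auto simp: nth_Cons split: nat.split)

lemma last_confs_from: "last (confs_from g ts) = fold fire ts g"
  by (induction ts arbitrary: g) auto

lemma length_confs [simp]: "length (confs r) = Suc (plen r)"
  by (simp add: confs_def plen_def)

lemma confs_ne [simp]: "confs r \<noteq> []"
  by (simp add: confs_def)

lemma nth_confs: "j \<le> plen r \<Longrightarrow> confs r ! j = fold fire (take j (snd r)) (fst r)"
  by (simp add: confs_def plen_def nth_confs_from)

lemma nth_confs_0: "confs r ! 0 = psource r"
  by (simp add: nth_confs psource_def)

lemma ptarget_eq_fold: "ptarget r = fold fire (snd r) (fst r)"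
  by (simp add: ptarget_def confs_def last_confs_from)

lemma nth_confs_Suc: "j < plen r \<Longrightarrow> confs r ! Suc j = fire (snd r ! j) (confs r ! j)"
  by (simp add: nth_confs take_Suc_conv_app_nth plen_def)

lemma confs_pcat:
  "ptarget r1 = psource r2 \<Longrightarrow> confs (pcat r1 r2) = butlast (confs r1) @ confs r2"
  by (simp add: confs_def pcat_def confs_from_append ptarget_eq_fold psource_def)

lemma is_path_Nil [simp]: "is_path T Z (g, [])"
  by (simp add: is_path_def)

lemma is_path_Cons:
  "is_path T Z (g, t # ts) \<longleftrightarrow> fireable T Z t g \<and> is_path T Z (fire t g, ts)"
  by (simp add: is_path_def confs_def All_less_Suc2)

lemma is_path_append:
  "is_path T Z (g, xs @ ys) \<longleftrightarrow> is_path T Z (g, xs) \<and> is_path T Z (fold fire xs g, ys)"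
  by (induction xs arbitrary: g) (auto simp: is_path_Cons)

lemma states_confs_in:
  assumes "wf_ocs Q T Z" "is_path T Z r" "fst (psource r) \<in> Q" "c \<in> set (confs r)"
  shows "fst c \<in> Q"
proof -
  have "fst (confs r ! m) \<in> Q" if "m \<le> plen r" for m
    using that
  proof (induction m)
    case 0
    then show ?case using assms(3) by (simp add: nth_confs_0)
  next
    case (Suc m)
    then have "fireable T Z (snd r ! m) (confs r ! m)"
      using assms(2) by (simp add: is_path_def plen_def)
    then have "snd r ! m \<in> T \<union> Z" by (auto simp: fireable_def)
    then have "ttrg (snd r ! m) \<in> Q" using assms(1) by (auto simp: wf_ocs_def ttrg_def)
    then show ?case using Suc.prems by (simp add: nth_confs_Suc fire_def)
  qed
  then show ?thesis using assms(4) by (auto simp: in_set_conv_nth)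
qed

definition cut_path :: "'q path \<Rightarrow> nat \<Rightarrow> nat \<Rightarrow> 'q path" where
  "cut_path r p q = (fst r, take p (snd r) @ drop q (snd r))"

lemma psource_cut_path [simp]: "psource (cut_path r p q) = psource r"
  by (simp add: cut_path_def psource_def)

lemma plen_cut_path: "p \<le> q \<Longrightarrow> q \<le> plen r \<Longrightarrow> plen (cut_path r p q) = plen r - (q - p)"
  by (simp add: cut_path_def plen_def)

lemma set_intermediate: "set (intermediate r) = (\<lambda>m. confs r ! m) ` {0<..<plen r}"
proof -
  have "intermediate r = map (\<lambda>j. confs r ! j) [1..<plen r]"
    by (simp add: intermediate_def list_eq_iff_nth_eq)
  moreover have "{1..<plen r} = {0<..<plen r}" by auto
  ultimately show ?thesis by simp
qed

context
  fixes r :: "'q path" and p q :: nat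
  assumes pq: "p \<le> q" "q \<le> plen r" and loop: "confs r ! p = confs r ! q"
begin

private lemma fold_take_eq: "fold fire (take p (snd r)) (fst r) = fold fire (take q (snd r)) (fst r)"
  using loop pq by (simp add: nth_confs)

lemma confs_cut_path: "confs (cut_path r p q) = take p (confs r) @ drop q (confs r)"
proof -
  have "butlast (confs_from (fst r) (take p (snd r))) = take p (confs r)"
    using pq by (simp add: butlast_conv_take confs_def plen_def min_absorb2 flip: take_confs_from)
  moreover have "confs_from (fold fire (take q (snd r)) (fst r)) (drop q (snd r)) = drop q (confs r)"
    using pq by (simp add: confs_def plen_def drop_confs_from)
  ultimately show ?thesis
    by (simp add: cut_path_def confs_def confs_from_append fold_take_eq)
qed

lemma is_path_cut_path: "is_path T Z r \<Longrightarrow> is_path T Z (cut_path r p q)"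
proof -
  assume "is_path T Z r"
  then have "is_path T Z (fst r, take p (snd r) @ drop p (snd r))"
    and "is_path T Z (fst r, take q (snd r) @ drop q (snd r))" by simp_all
  then show ?thesis
    by (simp add: cut_path_def is_path_append fold_take_eq del: append_take_drop_id)
qed

lemma ptarget_cut_path: "ptarget (cut_path r p q) = ptarget r"
  using pq by (simp add: ptarget_def confs_cut_path)

lemma nth_confs_cut_path:
  "m \<le> plen (cut_path r p q) \<Longrightarrow>
    confs (cut_path r p q) ! m = confs r ! (if m < p then m else m + (q - p))"
  using pq by (simp add: confs_cut_path nth_append plen_cut_path min_absorb2 add.commute)

lemma zero_count_cut_path_less:
  assumes "p \<le> z" "z < q" "snd (confs r ! z) = 0"
  shows "zero_count (cut_path r p q) < zero_count r"
proof -
  let ?P = "\<lambda>\<gamma>. snd \<gamma> = (0::nat)"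
  have "take p (confs r) @ drop p (take q (confs r)) = take q (confs r)"
    using pq by (metis append_take_drop_id min.absorb1 take_take)
  then have "confs r = take p (confs r) @ drop p (take q (confs r)) @ drop q (confs r)"
    by (metis append.assoc append_take_drop_id)
  then have "length (filter ?P (confs r))
      = length (filter ?P (take p (confs r) @ drop p (take q (confs r)) @ drop q (confs r)))"
    by (rule arg_cong)
  also have "\<dots> = length (filter ?P (take p (confs r) @ drop q (confs r)))
      + length (filter ?P (drop p (take q (confs r))))"
    by simp
  finally have split: "length (filter ?P (confs r)) = \<dots>" .
  have "confs r ! z \<in> set (drop p (take q (confs r)))"
    using assms pq by (auto simp: in_set_conv_nth intro!: exI[of _ "z - p"])
  then have "filter ?P (drop p (take q (confs r))) \<noteq> []"
    using assms(3) by (auto simp: filter_empty_conv)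
  with split show ?thesis by (simp add: zero_count_def confs_cut_path)
qed

lemma is_arc_cut_path: "is_arc T Z r \<Longrightarrow> is_arc T Z (cut_path r p q)"
proof -
  assume arc: "is_arc T Z r"
  have "snd (confs (cut_path r p q) ! m) > 0" if "0 < m" "m < plen (cut_path r p q)" for m
  proof -
    let ?m = "if m < p then m else m + (q - p)"
    have "0 < ?m" "?m < plen r" using that pq by (auto simp: plen_cut_path)
    then have "snd (confs r ! ?m) > 0" using arc by (auto simp: is_arc_def set_intermediate)
    then show ?thesis using that by (simp add: nth_confs_cut_path)
  qed
  then show ?thesis
    using arc by (auto simp: is_arc_def set_intermediate is_path_cut_path ptarget_cut_path)
qed

lemma low_cut_path: "low n r \<Longrightarrow> low n (cut_path r p q)"
  by (auto simp: low_def confs_cut_path dest: in_set_takeD in_set_dropD)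

end

lemma minimal_zero_count_nonzero_between_repeats:
  assumes "is_path T Z \<rho>"
    and min: "\<forall>\<rho>'. is_path T Z \<rho>' \<and> psource \<rho>' = psource \<rho> \<and> ptarget \<rho>' = ptarget \<rho>
      \<longrightarrow> zero_count \<rho> \<le> zero_count \<rho>'"
    and "p \<le> z" "z < q" "q \<le> plen \<rho>" "confs \<rho> ! p = confs \<rho> ! q"
  shows "snd (confs \<rho> ! z) \<noteq> 0"
proof
  assume "snd (confs \<rho> ! z) = 0"
  then have "zero_count (cut_path \<rho> p q) < zero_count \<rho>"
    using assms by (intro zero_count_cut_path_less) auto
  moreover have "is_path T Z (cut_path \<rho> p q)" "ptarget (cut_path \<rho> p q) = ptarget \<rho>"
    using assms by (auto intro: is_path_cut_path ptarget_cut_path)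
  ultimately show False using min by fastforce
qed

lemma distinct_butlast_confs_minimal_low_arc:
  assumes arc: "is_arc T Z r" and "low n r"
    and min: "\<forall>r'. is_arc T Z r' \<and> low n r' \<and> psource r' = psource r \<and> ptarget r' = ptarget r
      \<longrightarrow> plen r \<le> plen r'"
  shows "distinct (butlast (confs r))"
proof (rule ccontr)
  assume "\<not> distinct (butlast (confs r))"
  then obtain p q where "p < q" "q < plen r" "confs r ! p = confs r ! q"
    by (auto simp: distinct_conv_nth nth_butlast) (metis linorder_neqE_nat)
  moreover from this have "is_arc T Z (cut_path r p q)" "low n (cut_path r p q)"
    "ptarget (cut_path r p q) = ptarget r"
    using assms by (auto intro: is_arc_cut_path low_cut_path ptarget_cut_path)
  ultimately show False using min plen_cut_path[of p q r] by fastforce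
qed

lemma psource_pcat [simp]: "psource (pcat r1 r2) = psource r1"
  by (simp add: pcat_def psource_def)

lemma butlast_confs_normal_decomp:
  assumes "good_normal_decomp Q T Z sp sm S S' r pref up cap down suff a b"
  shows "butlast (confs r) = butlast (confs pref) @ butlast (confs up) @ butlast (confs cap)
    @ butlast (confs down) @ butlast (confs suff)"
  using assms by (simp add: good_normal_decomp_def Let_def confs_pcat butlast_append)

lemma pref_suff_confs_normal_decomp:
  assumes g: "good_normal_decomp Q T Z sp sm S S' r pref up cap down suff a b"
  defines "C \<equiv> set (butlast (confs pref) @ butlast (confs suff))"
  shows "card C = plen pref + plen suff"
    and "C \<subseteq> set (butlast (confs r))"
    and "\<forall>c \<in> C. snd c < 5 * card Q"
proof -
  have low: "low (card Q) pref" "low (card Q) suff"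
    and vii: "distinct (confs pref @ confs suff)"
    using g by (simp_all add: good_normal_decomp_def Let_def)
  have "distinct (butlast (confs pref) @ butlast (confs suff))"
    using vii by (auto simp: distinct_butlast dest: in_set_butlastD)
  from distinct_card[OF this] show "card C = plen pref + plen suff"
    by (simp add: C_def)
  show "C \<subseteq> set (butlast (confs r))"
    using butlast_confs_normal_decomp[OF g] by (auto simp: C_def)
  show "\<forall>c \<in> C. snd c < 5 * card Q"
    using low by (auto simp: C_def low_def dest: in_set_butlastD)
qed

definition chain_path :: "'q conf \<Rightarrow> (nat \<Rightarrow> 'q path) \<Rightarrow> nat \<Rightarrow> 'q path" where
  "chain_path \<gamma> rhos k = (\<gamma>, concat (map (\<lambda>i. snd (rhos i)) [1..<Suc k]))"

definition chained :: "'q conf \<Rightarrow> (nat \<Rightarrow> 'q path) \<Rightarrow> nat \<Rightarrow> bool" where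
  "chained \<gamma> rhos k \<longleftrightarrow> (1 \<le> k \<longrightarrow> psource (rhos 1) = \<gamma>)
     \<and> (\<forall>i. 1 \<le> i \<and> i < k \<longrightarrow> ptarget (rhos i) = psource (rhos (Suc i)))"

definition chain_offset :: "(nat \<Rightarrow> 'q path) \<Rightarrow> nat \<Rightarrow> nat" where
  "chain_offset rhos i = (\<Sum>l = 1..<i. plen (rhos l))"

lemma chain_offset_Suc: "1 \<le> i \<Longrightarrow> chain_offset rhos (Suc i) = chain_offset rhos i + plen (rhos i)"
  by (simp add: chain_offset_def)

lemma chain_offset_mono: "i \<le> j \<Longrightarrow> chain_offset rhos i \<le> chain_offset rhos j"
  unfolding chain_offset_def by (rule sum_mono2) auto

lemma fold_fire_chained:
  assumes "chained \<gamma> rhos k" "1 \<le> i" "i \<le> k"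
  shows "fold fire (concat (map (\<lambda>l. snd (rhos l)) [1..<i])) \<gamma> = psource (rhos i)"
  using assms(2,3)
proof (induction i rule: dec_induct)
  case base
  then show ?case using assms(1) by (simp add: chained_def)
next
  case (step i)
  then have "fold fire (concat (map (\<lambda>l. snd (rhos l)) [1..<Suc i])) \<gamma> = ptarget (rhos i)"
    by (simp add: ptarget_eq_fold psource_def)
  then show ?case using assms(1) step by (simp add: chained_def)
qed

lemma nth_confs_chain_path:
  assumes "chained \<gamma> rhos k" and i: "i \<in> {1..k}" and j: "j \<le> plen (rhos i)"
  shows "chain_offset rhos i + j \<le> plen (chain_path \<gamma> rhos k)"
    and "confs (chain_path \<gamma> rhos k) ! (chain_offset rhos i + j) = confs (rhos i) ! j"
proof -
  let ?ts = "\<lambda>m n. concat (map (\<lambda>l. snd (rhos l)) [m..<n])"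
  have "[1..<Suc k] = [1..<i] @ i # [Suc i..<Suc k]"
    using i upt_add_eq_append[of 1 i "Suc k - i"] by (simp add: upt_conv_Cons)
  then have split: "snd (chain_path \<gamma> rhos k) = ?ts 1 i @ snd (rhos i) @ ?ts (Suc i) (Suc k)"
    by (simp add: chain_path_def)
  have len: "length (?ts 1 i) = chain_offset rhos i"
    by (simp add: chain_offset_def length_concat plen_def interv_sum_list_conv_sum_set_nat)
  show "chain_offset rhos i + j \<le> plen (chain_path \<gamma> rhos k)"
    using split len j by (simp add: plen_def)
  then have "confs (chain_path \<gamma> rhos k) ! (chain_offset rhos i + j)
      = fold fire (?ts 1 i @ take j (snd (rhos i))) \<gamma>"
    using split len j by (simp add: nth_confs plen_def chain_path_def)
  also have "\<dots> = confs (rhos i) ! j"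
    using fold_fire_chained[OF assms(1)] i j by (simp add: nth_confs psource_def)
  finally show "confs (chain_path \<gamma> rhos k) ! (chain_offset rhos i + j) = confs (rhos i) ! j" .
qed

lemma set_confs_chain_path:
  assumes "chained \<gamma> rhos k" "i \<in> {1..k}"
  shows "set (confs (rhos i)) \<subseteq> set (confs (chain_path \<gamma> rhos k))"
proof
  fix c assume "c \<in> set (confs (rhos i))"
  then obtain j where "j \<le> plen (rhos i)" "c = confs (rhos i) ! j"
    by (auto simp: in_set_conv_nth less_Suc_eq_le)
  then show "c \<in> set (confs (chain_path \<gamma> rhos k))"
    using nth_confs_chain_path[OF assms] by (metis length_confs le_imp_less_Suc nth_mem)
qed

lemma disjoint_butlast_confs_chain_path:
  assumes path: "is_path T Z (chain_path \<gamma> rhos k)"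
    and min: "\<forall>\<rho>'. is_path T Z \<rho>' \<and> psource \<rho>' = \<gamma> \<and> ptarget \<rho>' = ptarget (chain_path \<gamma> rhos k)
      \<longrightarrow> zero_count (chain_path \<gamma> rhos k) \<le> zero_count \<rho>'"
    and "chained \<gamma> rhos k"
    and arcs: "\<forall>i \<in> {1..k}. is_arc T Z (rhos i)"
    and ij: "i \<in> {1..k}" "j \<in> {1..k}" "i < j"
  shows "set (butlast (confs (rhos i))) \<inter> set (butlast (confs (rhos j))) = {}"
proof (rule ccontr)
  let ?\<rho> = "chain_path \<gamma> rhos k" and ?s = "chain_offset rhos"
  note pos = nth_confs_chain_path[OF \<open>chained \<gamma> rhos k\<close>]
  assume "set (butlast (confs (rhos i))) \<inter> set (butlast (confs (rhos j))) \<noteq> {}"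
  then obtain x y where x: "x < plen (rhos i)" and y: "y < plen (rhos j)"
    and eq: "confs (rhos i) ! x = confs (rhos j) ! y"
    by (auto simp: in_set_conv_nth nth_butlast) metis
  have "?s i + x < ?s (Suc i)" using x ij by (simp add: chain_offset_Suc)
  also have "\<dots> \<le> ?s j" using ij by (simp add: chain_offset_mono)
  finally have before: "?s i + x < ?s j" .
  have loop: "confs ?\<rho> ! (?s i + x) = confs ?\<rho> ! (?s j + y)"
    using pos(2)[of i x] pos(2)[of j y] x y ij eq by simp
  have start: "snd (confs ?\<rho> ! ?s j) = 0"
    using pos(2)[of j 0] arcs ij by (simp add: nth_confs_0 is_arc_def)
  obtain z where "?s i + x \<le> z" "z < ?s j + y" "snd (confs ?\<rho> ! z) = 0"
  proof (cases "y = 0")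
    case True
    then show ?thesis using that[of "?s i + x"] before loop start by simp
  next
    case False
    then show ?thesis using that[of "?s j"] before start by simp
  qed
  moreover have "?s j + y \<le> plen ?\<rho>" using pos(1)[of j y] y ij by simp
  moreover have "psource ?\<rho> = \<gamma>" by (simp add: chain_path_def psource_def)
  ultimately show False
    using minimal_zero_count_nonzero_between_repeats[OF path _ _ _ _ loop] min by metis
qed

lemma sum_card_le_card_if_disjoint:
  fixes C :: "'i::linorder \<Rightarrow> 'a set"
  assumes "finite I" "finite B" "\<forall>i \<in> I. C i \<subseteq> B"
    and "\<forall>i \<in> I. \<forall>j \<in> I. i < j \<longrightarrow> C i \<inter> C j = {}"
  shows "(\<Sum>i\<in>I. card (C i)) \<le> card B"
proof -
  have "\<forall>i \<in> I. \<forall>j \<in> I. i \<noteq> j \<longrightarrow> C i \<inter> C j = {}"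
    using assms(4) by (metis Int_commute neq_iff)
  moreover have "\<forall>i \<in> I. finite (C i)" using assms(2,3) by (blast intro: finite_subset)
  ultimately have "(\<Sum>i\<in>I. card (C i)) = card (\<Union>i\<in>I. C i)"
    using assms(1) by (simp add: card_UN_disjoint)
  also have "\<dots> \<le> card B" using assms(2,3) by (intro card_mono) auto
  finally show ?thesis .
qed

lemma sum_card_selected_confs_chain_path_le:
  assumes wf: "wf_ocs Q T Z" and "fst \<gamma> \<in> Q"
    and path: "is_path T Z (chain_path \<gamma> rhos k)"
    and min: "\<forall>\<rho>'. is_path T Z \<rho>' \<and> psource \<rho>' = \<gamma> \<and> ptarget \<rho>' = ptarget (chain_path \<gamma> rhos k)
      \<longrightarrow> zero_count (chain_path \<gamma> rhos k) \<le> zero_count \<rho>'"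
    and ch: "chained \<gamma> rhos k"
    and arcs: "\<forall>i \<in> {1..k}. is_arc T Z (rhos i)"
    and sel: "\<And>i. i \<in> {1..k} \<Longrightarrow> C i \<subseteq> set (butlast (confs (rhos i))) \<and> (\<forall>c \<in> C i. snd c < m)"
  shows "(\<Sum>i\<in>{1..k}. card (C i)) \<le> card Q * m"
proof -
  have "C i \<subseteq> Q \<times> {..<m}" if i: "i \<in> {1..k}" for i
  proof
    fix c assume c: "c \<in> C i"
    then have "c \<in> set (confs (chain_path \<gamma> rhos k))"
      using sel[OF i] set_confs_chain_path[OF ch i] by (blast dest: in_set_butlastD)
    then have "fst c \<in> Q"
      using states_confs_in[OF wf path] \<open>fst \<gamma> \<in> Q\<close> by (simp add: chain_path_def psource_def)
    with sel[OF i] c show "c \<in> Q \<times> {..<m}" by (cases c) auto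
  qed
  moreover have "C i \<inter> C j = {}" if "i \<in> {1..k}" "j \<in> {1..k}" "i < j" for i j
    using disjoint_butlast_confs_chain_path[OF path min ch arcs that] sel[OF that(1)] sel[OF that(2)]
    by blast
  moreover have "finite (Q \<times> {..<m})" using wf by (simp add: wf_ocs_def)
  ultimately have "(\<Sum>i\<in>{1..k}. card (C i)) \<le> card (Q \<times> {..<m})"
    by (intro sum_card_le_card_if_disjoint) auto
  then show ?thesis by (simp add: card_cartesian_product)
qed

theorem lemma3:
  fixes Q :: "'q set" and Tpos Tzero :: "'q trans set"
    and sigp sigm :: "'q set \<Rightarrow> 'q trans list"
    and \<alpha> \<beta> :: "'q conf" and \<rho> :: "'q path" and k :: nat
    and rhos :: "nat \<Rightarrow> 'q path" and L N :: "nat set"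
    and Si Ti :: "nat \<Rightarrow> 'q set"
    and pref up cap down suff :: "nat \<Rightarrow> 'q path" and a b :: "nat \<Rightarrow> nat"
  assumes wf: "wf_ocs Q Tpos Tzero"
    and choice: "valid_choice Q Tpos sigp sigm"
    and \<alpha>: "fst \<alpha> \<in> Q" "snd \<alpha> = 0"
    and \<beta>: "fst \<beta> \<in> Q" "snd \<beta> = 0"
    and \<rho>_path: "is_path Tpos Tzero \<rho>" "psource \<rho> = \<alpha>" "ptarget \<rho> = \<beta>"
    and \<rho>_min: "\<forall>\<rho>'. is_path Tpos Tzero \<rho>' \<and> psource \<rho>' = \<alpha> \<and> ptarget \<rho>' = \<beta>
                  \<longrightarrow> zero_count \<rho> \<le> zero_count \<rho>'"
    and \<rho>_split: "\<rho> = (\<alpha>, concat (map (\<lambda>i. snd (rhos i)) [1..<Suc k]))"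
    and arcs: "\<forall>i \<in> {1..k}. is_arc Tpos Tzero (rhos i)"
    and chain_first: "k \<ge> 1 \<longrightarrow> psource (rhos 1) = \<alpha>"
    and chain: "\<forall>i. 1 \<le> i \<and> i < k \<longrightarrow> ptarget (rhos i) = psource (rhos (Suc i))"
    and chain_last: "k \<ge> 1 \<longrightarrow> ptarget (rhos k) = \<beta>"
    and partition: "L \<union> N = {1..k}" "L \<inter> N = {}"
    and lowarcs: "\<forall>i \<in> L. low (card Q) (rhos i) \<and>
         (\<forall>\<rho>'. is_arc Tpos Tzero \<rho>' \<and> low (card Q) \<rho>' \<and>
                psource \<rho>' = psource (rhos i) \<and> ptarget \<rho>' = ptarget (rhos i)
                \<longrightarrow> plen (rhos i) \<le> plen \<rho>')"
    and normals: "\<forall>i \<in> N. good_normal_decomp Q Tpos Tzero sigp sigm (Si i) (Ti i) (rhos i)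
                     (pref i) (up i) (cap i) (down i) (suff i) (a i) (b i)"
  shows "(\<Sum>i\<in>L. plen (rhos i)) + (\<Sum>i\<in>N. plen (pref i) + plen (suff i)) \<le> 5 * (card Q)^2"
proof -
  have split: "\<rho> = chain_path \<alpha> rhos k" and ch: "chained \<alpha> rhos k"
    using \<rho>_split chain_first chain by (simp_all add: chain_path_def chained_def)
  have fin: "finite L" "finite N" using partition(1) by (metis finite_Un finite_atLeastAtMost)+
  define C where "C i = (if i \<in> L then set (butlast (confs (rhos i)))
    else set (butlast (confs (pref i)) @ butlast (confs (suff i))))" for i
  have C_L: "card (C i) = plen (rhos i) \<and> C i \<subseteq> set (butlast (confs (rhos i)))
      \<and> (\<forall>c \<in> C i. snd c < 5 * card Q)" if i: "i \<in> L" for i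
  proof -
    have "low (card Q) (rhos i)" "distinct (butlast (confs (rhos i)))"
      using distinct_butlast_confs_minimal_low_arc lowarcs arcs partition i by blast+
    with i show ?thesis by (auto simp: C_def distinct_card low_def dest: in_set_butlastD)
  qed
  have C_N: "card (C i) = plen (pref i) + plen (suff i) \<and> C i \<subseteq> set (butlast (confs (rhos i)))
      \<and> (\<forall>c \<in> C i. snd c < 5 * card Q)" if i: "i \<in> N" for i
    using pref_suff_confs_normal_decomp[OF normals[rule_format, OF i]] i partition(2)
    by (auto simp: C_def)
  have "C i \<subseteq> set (butlast (confs (rhos i))) \<and> (\<forall>c \<in> C i. snd c < 5 * card Q)"
    if "i \<in> {1..k}" for i
    using that partition(1) C_L[of i] C_N[of i] by blast
  moreover have "is_path Tpos Tzero (chain_path \<alpha> rhos k)"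
    and "\<forall>\<rho>'. is_path Tpos Tzero \<rho>' \<and> psource \<rho>' = \<alpha> \<and> ptarget \<rho>' = ptarget (chain_path \<alpha> rhos k)
      \<longrightarrow> zero_count (chain_path \<alpha> rhos k) \<le> zero_count \<rho>'"
    using \<rho>_path \<rho>_min split by simp_all
  ultimately have "(\<Sum>i\<in>{1..k}. card (C i)) \<le> card Q * (5 * card Q)"
    using sum_card_selected_confs_chain_path_le[OF wf \<alpha>(1) _ _ ch arcs] by blast
  moreover have "(\<Sum>i\<in>{1..k}. card (C i)) = (\<Sum>i\<in>L. card (C i)) + (\<Sum>i\<in>N. card (C i))"
    using sum.union_disjoint[OF fin partition(2)] partition(1) by simp
  moreover have "\<dots> = (\<Sum>i\<in>L. plen (rhos i)) + (\<Sum>i\<in>N. plen (pref i) + plen (suff i))"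
    using C_L C_N by simp
  ultimately show ?thesis by (simp add: power2_eq_square)
qed

end
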